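(* Let $k\geq 1$ and $g\geq 0$ be integers, let $a<b$, and let $a=\lambda_0<\lambda_1<\cdots<\lambda_g<\lambda_{g+1}=b$. Extend the knot sequence by coincident additional knots $\lambda_{-k}=\cdots=\lambda_{-1}=\lambda_0=a$ and $b=\lambda_{g+1}=\lambda_{g+2}=\cdots=\lambda_{g+k+1}$. Let $B_i^{k+1}$, $i=-k,\dots,g$, be the normalized B-splines of degree $k$ (order $k+1$) on this extended knot sequence, and for $i=-k,\dots,g-1$ define $$Z_i^{k+1}(x)=(k+1)\left(\frac{B_i^{k+1}(x)}{\lambda_{i+k+1}-\lambda_i}-\frac{B_{i+1}^{k+1}(x)}{\lambda_{i+k+2}-\lambda_{i+1}}\right),\qquad x\in[a,b].$$ Then the functions $Z_{-k}^{k+1},\dots,Z_{g-1}^{k+1}$ form a basis of the space $$\mathcal{Z}_k^{\Delta\lambda}[a,b]=\Big\{s\in \mathcal{S}_k^{\Delta\lambda}[a,b] \;:\; \int_a^b s(x)\,\mathrm{d}x=0\Big\}.$$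
   Context: $\mathcal{S}_k^{\Delta\lambda}[a,b]$ is the space of functions on $[a,b]$ that are polynomials of degree at most $k$ on each $[\lambda_i,\lambda_{i+1}]$, $i=0,\dots,g$, and are $k-1$ times continuously differentiable on $[a,b]$. Normalized B-splines are defined by the Cox–de Boor recursion: $B_i^1(x)=1$ if $x\in[\lambda_i,\lambda_{i+1})$ and $0$ otherwise (with the usual convention at the right endpoint $b$), and $B_i^{m+1}(x)=\frac{x-\lambda_i}{\lambda_{i+m}-\lambda_i}B_i^m(x)+\frac{\lambda_{i+m+1}-x}{\lambda_{i+m+1}-\lambda_{i+1}}B_{i+1}^m(x)$, with the convention that terms with zero denominator are omitted. The function $Z_i^{k+1}$ coincides with the derivative of the B-spline $B_i^{k+2}$; the denominators $\lambda_{i+k+1}-\lambda_i$ for $i=-k,\dots,g$ are positive. *)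

theory Defs
  imports "HOL-Analysis.Analysis" "HOL-Computational_Algebra.Polynomial"
begin

text \<open>Normalized B-splines via the Cox--de Boor recursion on the knot sequence lam.
  bspline b lam m i x is B_i^m(x).  The order-1 B-spline is the indicator of
  [lam i, lam (i+1)), with the usual convention at the right endpoint b: it also
  takes the value 1 at x = b when lam i < lam (i+1) = b.
  Terms with zero denominator are omitted.\<close>
fun bspline :: "real \<Rightarrow> (int \<Rightarrow> real) \<Rightarrow> nat \<Rightarrow> int \<Rightarrow> real \<Rightarrow> real" where
  "bspline b lam 0 i x = 0"
| "bspline b lam (Suc 0) i x =
     (if (lam i \<le> x \<and> x < lam (i+1)) \<or> (x = b \<and> lam i < b \<and> lam (i+1) = b) then 1 else 0)"
| "bspline b lam (Suc (Suc m)) i x =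
     (if lam (i + int (Suc m)) - lam i = 0 then 0
      else (x - lam i) / (lam (i + int (Suc m)) - lam i) * bspline b lam (Suc m) i x)
   + (if lam (i + int (Suc m) + 1) - lam (i+1) = 0 then 0
      else (lam (i + int (Suc m) + 1) - x) / (lam (i + int (Suc m) + 1) - lam (i+1))
           * bspline b lam (Suc m) (i+1) x)"

definition Zfun :: "real \<Rightarrow> (int \<Rightarrow> real) \<Rightarrow> nat \<Rightarrow> int \<Rightarrow> real \<Rightarrow> real" where
  "Zfun b lam k i x = real (k+1) *
     (bspline b lam (k+1) i x / (lam (i + int k + 1) - lam i)
      - bspline b lam (k+1) (i+1) x / (lam (i + int k + 2) - lam (i+1)))"

definition Cn_on :: "nat \<Rightarrow> real set \<Rightarrow> (real \<Rightarrow> real) \<Rightarrow> bool" where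
  "Cn_on n S s \<longleftrightarrow> (\<exists>D :: nat \<Rightarrow> real \<Rightarrow> real.
      (\<forall>x\<in>S. D 0 x = s x) \<and>
      (\<forall>j\<le>n. continuous_on S (D j)) \<and>
      (\<forall>j<n. \<forall>x\<in>S. (D j has_real_derivative D (Suc j) x) (at x within S)))"

definition spline_space :: "nat \<Rightarrow> nat \<Rightarrow> (int \<Rightarrow> real) \<Rightarrow> real \<Rightarrow> real \<Rightarrow> (real \<Rightarrow> real) set" where
  "spline_space k g lam a b = {s.
      (\<forall>i::int. 0 \<le> i \<and> i \<le> int g \<longrightarrow>
         (\<exists>p :: real poly. degree p \<le> k \<and> (\<forall>x\<in>{lam i..lam (i+1)}. s x = poly p x)))
      \<and> Cn_on (k - 1) {a..b} s}"

definition zero_int_spline_space :: "nat \<Rightarrow> nat \<Rightarrow> (int \<Rightarrow> real) \<Rightarrow> real \<Rightarrow> real \<Rightarrow> (real \<Rightarrow> real) set" where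
  "zero_int_spline_space k g lam a b =
     {s \<in> spline_space k g lam a b. integral {a..b} s = 0}"

end

theory Submission
  imports Defs "HOL-Library.Function_Algebras"
begin

text \<open>
  On each knot interval every B-spline is a polynomial, computed by running the Cox--de Boor
  recursion on polynomials.  Differentiating the recursion shows that the derivative of
  B_i^{k+2} is Z_i^{k+1}, and, the interior knots being simple, that the pieces of B_i^m agree
  at the knots up to order m - 2.  Hence Z_i^{k+1} is a spline of degree k, with integral
  B_i^{k+2}(b) - B_i^{k+2}(a) = 0 for i = -k, ..., g - 1.

  A vanishing combination of the Z_i^{k+1} is the derivative of the same combination of the
  B_i^{k+2}.  Differentiating a combination of B-splines of order m + 1 gives the combination of
  those of order m with the backward differences of the coefficients as new coefficients; by
  induction on the order the B-splines are independent, so the coefficients are constant and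
  hence zero.

  Finally every spline is a combination of the k + g + 1 functions x^l and (x - lam_j)_+^k.
  The splines with zero integral form a subspace that misses the constant 1, so the k + g
  independent functions Z_i^{k+1} span it.
\<close>

lemma higher_pderiv_diff:
  fixes p q :: "'a::idom poly"
  shows "(pderiv ^^ n) (p - q) = (pderiv ^^ n) p - (pderiv ^^ n) q"
  by (induction n) (simp_all add: pderiv_diff)

lemma pderiv_smult_linear_mult:
  fixes p :: "'a::idom poly"
  shows "pderiv (smult c [:u, v:] * p) = smult (c * v) p + smult c [:u, v:] * pderiv p"
  unfolding pderiv_mult pderiv_smult by (simp add: pderiv_pCons mult.commute)

lemma linear_power_dvd_if_higher_pderiv_eq_0:
  fixes p :: "'a::field_char_0 poly"
  assumes "\<And>r. r < n \<Longrightarrow> poly ((pderiv ^^ r) p) c = 0"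
  shows "[:-c, 1:] ^ n dvd p"
  using assms
proof (induction n arbitrary: p)
  case 0
  then show ?case by simp
next
  case (Suc n)
  have "[:-c, 1:] ^ n dvd pderiv p"
    using Suc.prems[of "Suc _"] by (intro Suc.IH) (simp del: funpow.simps add: funpow_Suc_right)
  moreover have p_root: "poly p c = 0"
    using Suc.prems[of 0] by simp
  ultimately show ?case
  proof (cases "pderiv p = 0")
    case False
    then have "p \<noteq> 0" by auto
    with False \<open>[:-c, 1:] ^ n dvd pderiv p\<close> p_root show ?thesis
      by (simp add: order_divides order_pderiv del: power_Suc)
  qed (use p_root pderiv_iszero in force)
qed

lemma poly_diff_eq_smult_linear_power:
  fixes p q :: "'a::field_char_0 poly"
  assumes "degree p \<le> n" "degree q \<le> n"
    and "\<And>r. r < n \<Longrightarrow> poly ((pderiv ^^ r) p) c = poly ((pderiv ^^ r) q) c"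
  shows "\<exists>\<beta>. p - q = smult \<beta> ([:-c, 1:] ^ n)"
proof -
  have "[:-c, 1:] ^ n dvd p - q"
    using assms(3) by (intro linear_power_dvd_if_higher_pderiv_eq_0) (simp add: higher_pderiv_diff)
  then obtain r where r: "p - q = [:-c, 1:] ^ n * r"
    by (elim dvdE)
  have "degree r = 0"
  proof (cases "r = 0")
    case False
    then have "degree (p - q) = n + degree r"
      unfolding r by (subst degree_mult_eq) (auto simp: degree_power_eq)
    then show ?thesis
      using degree_diff_le[OF assms(1,2)] by simp
  qed simp
  then show ?thesis
    using r by (auto elim!: degree_eq_zeroE)
qed

lemma poly_eq_sum_coeff_if_degree_le:
  fixes p :: "'a::comm_semiring_1 poly"
  assumes "degree p \<le> n"
  shows "poly p x = (\<Sum>i\<le>n. coeff p i * x ^ i)"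
proof -
  have "poly p x = (\<Sum>i\<le>degree p. coeff p i * x ^ i)"
    by (rule poly_altdef)
  also have "\<dots> = (\<Sum>i\<le>n. coeff p i * x ^ i)"
    by (rule sum.mono_neutral_left) (use assms in \<open>auto simp: coeff_eq_0\<close>)
  finally show ?thesis .
qed

lemma poly_eq_0_if_zero_on_interval:
  fixes p :: "real poly"
  assumes "u < v" "\<And>x. x \<in> {u<..<v} \<Longrightarrow> poly p x = 0"
  shows "p = 0"
proof (rule ccontr)
  assume "p \<noteq> 0"
  then have "finite {x. poly p x = 0}"
    by (rule poly_roots_finite)
  moreover have "{u<..<v} \<subseteq> {x. poly p x = 0}"
    using assms(2) by auto
  ultimately show False
    using assms(1) infinite_Ioo finite_subset by blast
qed

lemma sum_smult_diff_shift_int: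
  fixes G :: "int \<Rightarrow> 'a::comm_ring poly"
  assumes "G lo = 0" "G (hi + 1) = 0"
  shows "(\<Sum>i\<in>{lo..hi}. smult (c i) (G i - G (i + 1)))
    = (\<Sum>i\<in>{lo + 1..hi}. smult (c i - c (i - 1)) (G i))"
proof -
  have "(\<Sum>i\<in>{lo..hi}. smult (c i) (G (i + 1))) = (\<Sum>i\<in>{lo + 1..hi + 1}. smult (c (i - 1)) (G i))"
    by (rule sum.reindex_bij_witness[of _ "\<lambda>i. i - 1" "\<lambda>i. i + 1"]) auto
  also have "\<dots> = (\<Sum>i\<in>{lo + 1..hi}. smult (c (i - 1)) (G i))"
  proof (rule sum.mono_neutral_right)
    show "\<forall>i\<in>{lo + 1..hi + 1} - {lo + 1..hi}. smult (c (i - 1)) (G i) = 0"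
    proof
      fix i assume "i \<in> {lo + 1..hi + 1} - {lo + 1..hi}"
      then have "i = hi + 1" by auto
      then show "smult (c (i - 1)) (G i) = 0" using assms(2) by simp
    qed
  qed auto
  finally have shifted: "(\<Sum>i\<in>{lo..hi}. smult (c i) (G (i + 1))) = \<dots>" .
  have "(\<Sum>i\<in>{lo..hi}. smult (c i) (G i)) = (\<Sum>i\<in>{lo + 1..hi}. smult (c i) (G i))"
  proof (rule sum.mono_neutral_right)
    show "\<forall>i\<in>{lo..hi} - {lo + 1..hi}. smult (c i) (G i) = 0"
    proof
      fix i assume "i \<in> {lo..hi} - {lo + 1..hi}"
      then have "i = lo" by auto
      then show "smult (c i) (G i) = 0" using assms(1) by simp
    qed
  qed auto
  with shifted show ?thesis
    by (simp add: smult_diff_right smult_diff_left sum_subtractf)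
qed

lemma eq_first_if_consecutive_eq_int:
  assumes "\<And>i. lo < i \<Longrightarrow> i \<le> hi \<Longrightarrow> c i = c (i - 1)" "lo \<le> i" "i \<le> hi"
  shows "c i = c (lo :: int)"
  using assms(2,3)
proof (induction i rule: int_ge_induct)
  case (step i)
  then show ?case using assms(1)[of "i + 1"] by simp
qed simp

lemma sum_diff_telescope_int:
  fixes f :: "int \<Rightarrow> 'a::ab_group_add"
  assumes "0 \<le> n"
  shows "(\<Sum>j\<in>{1..n}. f j - f (j - 1)) = f n - f 0"
  using assms
proof (induction n rule: int_ge_induct)
  case (step n)
  have "{1..n + 1} = insert (n + 1) {1..n}" using step.hyps by auto
  then show ?case using step by simp
qed simp

lemma has_field_derivative_within_closed_Union:
  assumes "finite I" "\<And>i. i \<in> I \<Longrightarrow> closed (U i)"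
    and "\<And>i. i \<in> I \<Longrightarrow> x \<in> U i \<Longrightarrow> (f has_field_derivative f') (at x within U i)"
  shows "(f has_field_derivative f') (at x within \<Union>(U ` I))"
  using assms
proof (induction I rule: finite_induct)
  case empty
  then show ?case by (simp add: has_field_derivative_iff)
next
  case (insert i I)
  have "(f has_field_derivative f') (at x within U i)"
  proof (cases "x \<in> U i")
    case False
    then have "at x within U i = bot"
      using insert.prems(1) closed_limpt trivial_limit_within by blast
    then show ?thesis by (simp add: has_field_derivative_iff)
  qed (use insert in auto)
  moreover have "(f has_field_derivative f') (at x within \<Union>(U ` I))"
    using insert by auto
  ultimately show ?case
    unfolding has_field_derivative_iff by (simp add: Lim_within_Un)
qed

lemma derivs_eq_higher_pderiv_on_interval:
  fixes D :: "nat \<Rightarrow> real \<Rightarrow> real"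
  assumes "u < v" "{u..v} \<subseteq> S"
    and D_0: "\<And>x. x \<in> {u..v} \<Longrightarrow> D 0 x = poly p x"
    and cont: "\<And>r. r \<le> n \<Longrightarrow> continuous_on S (D r)"
    and deriv: "\<And>r x. r < n \<Longrightarrow> x \<in> S \<Longrightarrow> (D r has_real_derivative D (Suc r) x) (at x within S)"
    and "r \<le> n" "x \<in> {u..v}"
  shows "D r x = poly ((pderiv ^^ r) p) x"
  using assms(6,7)
proof (induction r arbitrary: x)
  case 0
  then show ?case using D_0 by simp
next
  case (Suc r)
  have interior: "D (Suc r) y - poly ((pderiv ^^ Suc r) p) y = 0" if y: "y \<in> {u<..<v}" for y
  proof -
    have "at y within S = at y"
      using y assms(2) by (intro at_within_open_subset[of _ "{u<..<v}"]) auto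
    moreover have "y \<in> S"
      using y assms(2) by auto
    ultimately have "(D r has_real_derivative D (Suc r) y) (at y)"
      using deriv[of r y] Suc.prems by simp
    moreover have "(D r has_real_derivative poly ((pderiv ^^ Suc r) p) y) (at y)"
    proof (rule has_field_derivative_transform_within_open[where S = "{u<..<v}"])
      show "((\<lambda>y. poly ((pderiv ^^ r) p) y) has_real_derivative poly ((pderiv ^^ Suc r) p) y) (at y)"
        by (simp add: poly_DERIV)
    qed (use y Suc in auto)
    ultimately show ?thesis
      using DERIV_unique by auto
  qed
  have "continuous_on (closure {u<..<v}) (\<lambda>y. D (Suc r) y - poly ((pderiv ^^ Suc r) p) y)"
    using \<open>u < v\<close> continuous_on_subset[OF cont[OF Suc.prems(1)] assms(2)]
    by (auto intro!: continuous_intros)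
  from continuous_constant_on_closure[OF this interior] show ?case
    using \<open>u < v\<close> Suc.prems(2) by simp
qed

section \<open>Piecewise polynomial form of the B-splines\<close>

text \<open>bspline_poly lam m i j is the polynomial that agrees with B_i^m on the j-th knot
  interval.  The junk value 1 / 0 = 0 drops the terms with zero denominator, as in the
  Cox--de Boor recursion.\<close>

fun bspline_poly :: "(int \<Rightarrow> real) \<Rightarrow> nat \<Rightarrow> int \<Rightarrow> int \<Rightarrow> real poly" where
  "bspline_poly lam 0 i j = 0"
| "bspline_poly lam (Suc 0) i j = (if i = j then 1 else 0)"
| "bspline_poly lam (Suc (Suc m)) i j =
     smult (1 / (lam (i + int (Suc m)) - lam i)) [:- lam i, 1:] * bspline_poly lam (Suc m) i j
   + smult (1 / (lam (i + int (Suc m) + 1) - lam (i + 1))) [:lam (i + int (Suc m) + 1), -1:]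
       * bspline_poly lam (Suc m) (i + 1) j"

lemma bspline_poly_Suc:
  assumes "0 < m"
  shows "bspline_poly lam (Suc m) i j =
      smult (1 / (lam (i + int m) - lam i)) [:- lam i, 1:] * bspline_poly lam m i j
    + smult (1 / (lam (i + 1 + int m) - lam (i + 1))) [:lam (i + 1 + int m), -1:]
        * bspline_poly lam m (i + 1) j"
  using assms by (cases m) (simp_all add: ac_simps)

declare bspline_poly.simps(3) [simp del]

definition bspline_poly_diff :: "(int \<Rightarrow> real) \<Rightarrow> nat \<Rightarrow> int \<Rightarrow> int \<Rightarrow> real poly" where
  "bspline_poly_diff lam m i j =
     smult (1 / (lam (i + int m) - lam i)) (bspline_poly lam m i j)
   - smult (1 / (lam (i + 1 + int m) - lam (i + 1))) (bspline_poly lam m (i + 1) j)"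

lemma degree_bspline_poly: "degree (bspline_poly lam m i j) \<le> m - 1"
proof (induction m arbitrary: i)
  case (Suc m)
  show ?case
  proof (cases "m = 0")
    case False
    have linear_factor: "degree (smult c [:u, v:] * q) \<le> m" if "degree q \<le> m - 1" for c u v and q :: "real poly"
      by (rule order.trans[OF degree_mult_le]) (use that False degree_smult_le[of c "[:u, v:]"] in auto)
    have "0 < m" using False by simp
    then show ?thesis
      unfolding bspline_poly_Suc[OF \<open>0 < m\<close>] diff_Suc_1 by (intro degree_add_le linear_factor Suc.IH)
  qed simp
qed simp

lemma bspline_poly_eq_0_outside:
  "j < i \<or> i + int m \<le> j \<Longrightarrow> bspline_poly lam m i j = 0"
proof (induction m arbitrary: i)
  case (Suc m)
  then show ?case by (cases "m = 0") (auto simp: bspline_poly_Suc)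
qed simp

lemma bspline_polys_order_1_independent:
  assumes "\<And>j. j \<in> {0..int g} \<Longrightarrow> (\<Sum>i\<in>{0..int g}. smult (c i) (bspline_poly lam (Suc 0) i j)) = 0"
  shows "\<forall>i\<in>{0..int g}. c i = 0"
proof
  fix i assume i: "i \<in> {0..int g}"
  have "[:c i:] = (\<Sum>l\<in>{0..int g}. if l = i then [:c l:] else 0)"
    using i by simp
  also have "\<dots> = (\<Sum>l\<in>{0..int g}. smult (c l) (bspline_poly lam (Suc 0) l i))"
    by (intro sum.cong) auto
  also have "\<dots> = 0"
    using assms i by simp
  finally show "c i = 0"
    by simp
qed

locale extended_knots =
  fixes lam :: "int \<Rightarrow> real" and g :: nat and a b :: real
  assumes lam_left: "i \<le> 0 \<Longrightarrow> lam i = a"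
    and lam_right: "int g + 1 \<le> i \<Longrightarrow> lam i = b"
    and lam_strict_mono: "0 \<le> i \<Longrightarrow> i \<le> int g \<Longrightarrow> lam i < lam (i + 1)"
begin

lemma lam_le_Suc: "lam i \<le> lam (i + 1)"
  using lam_left[of i] lam_left[of "i + 1"] lam_strict_mono[of i] lam_right[of i] lam_right[of "i + 1"]
  by (cases "i < 0"; cases "i \<le> int g") auto

lemma lam_mono:
  assumes "i \<le> l"
  shows "lam i \<le> lam l"
  using assms
proof (induction l rule: int_ge_induct)
  case (step l)
  then show ?case using lam_le_Suc[of l] by linarith
qed simp

lemma lam_less:
  assumes "i < l" "i \<le> int g" "1 \<le> l"
  shows "lam i < lam l"
proof -
  define j where "j = max i 0"
  have "lam i \<le> lam j" using lam_mono[of i j] by (simp add: j_def)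
  also have "lam j < lam (j + 1)" using lam_strict_mono[of j] assms by (simp add: j_def)
  also have "lam (j + 1) \<le> lam l" using lam_mono[of "j + 1" l] assms by (simp add: j_def)
  finally show ?thesis .
qed

lemma a_less_b: "a < b"
  using lam_less[of 0 "int g + 1"] lam_left[of 0] lam_right[of "int g + 1"] by simp

lemma lam_ge_a: "a \<le> lam i"
  using lam_mono[of 0 i] lam_left[of 0] lam_left[of i] by (cases "0 \<le> i") auto

lemma lam_le_b: "lam i \<le> b"
  using lam_mono[of i "int g + 1"] lam_right[of "int g + 1"] lam_right[of i]
  by (cases "i \<le> int g + 1") auto

lemma lam_less_b: "i \<le> int g \<Longrightarrow> lam i < b"
  using lam_less[of i "int g + 1"] lam_right[of "int g + 1"] by simp

lemma lam_eq_b_iff: "lam i = b \<longleftrightarrow> int g + 1 \<le> i"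
  using lam_less_b[of i] lam_right[of i] by force

lemma knot_interval_subset: "{lam j..lam (j + 1)} \<subseteq> {a..b}"
  using lam_ge_a[of j] lam_le_b[of "j + 1"] by auto

text \<open>Half-open, with b added to the last interval, as for the order-1 B-splines: exactly one
  B_j^1 equals 1 at each point of [a, b].\<close>

definition in_piece :: "int \<Rightarrow> real \<Rightarrow> bool" where
  "in_piece j x \<longleftrightarrow> 0 \<le> j \<and> j \<le> int g \<and> (lam j \<le> x \<and> x < lam (j + 1) \<or> j = int g \<and> x = b)"

definition piece :: "real \<Rightarrow> int" where
  "piece x = (THE j. in_piece j x)"

lemma in_piece_imp_closed:
  "in_piece j x \<Longrightarrow> lam j \<le> x \<and> x \<le> lam (j + 1) \<and> 0 \<le> j \<and> j \<le> int g"
  unfolding in_piece_def using lam_le_b[of j] lam_right[of "int g + 1"] by auto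

lemma in_piece_unique:
  assumes "in_piece j x" "in_piece j' x"
  shows "j = j'"
proof -
  have False if "in_piece u x" "in_piece v x" "u < v" for u v
  proof -
    have "x < lam (u + 1)" using that(1,3) in_piece_imp_closed[OF that(2)] unfolding in_piece_def by auto
    moreover have "lam (u + 1) \<le> lam v" using lam_mono that(3) by simp
    ultimately show False using in_piece_imp_closed[OF that(2)] by simp
  qed
  then show ?thesis using assms by (metis linorder_neqE)
qed

lemma ex_in_piece:
  assumes "x \<in> {a..b}"
  shows "\<exists>j. in_piece j x"
proof (cases "x = b")
  case True
  then show ?thesis by (intro exI[of _ "int g"]) (auto simp: in_piece_def)
next
  case False
  define S where "S = {j \<in> {0..int g}. lam j \<le> x}"
  have "finite S" unfolding S_def by (rule finite_subset[of _ "{0..int g}"]) auto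
  have "0 \<in> S" using assms lam_left[of 0] by (auto simp: S_def)
  define j where "j = Max S"
  have j: "j \<in> S" "\<And>l. l \<in> S \<Longrightarrow> l \<le> j"
    using \<open>finite S\<close> \<open>0 \<in> S\<close> Max_in by (auto simp: j_def)
  have "x < lam (j + 1)"
  proof (cases "j + 1 \<le> int g")
    case True
    then show ?thesis using j(1) j(2)[of "j + 1"] by (force simp: S_def)
  next
    case False
    then show ?thesis using j(1) lam_right[of "j + 1"] assms \<open>x \<noteq> b\<close> by (auto simp: S_def)
  qed
  then show ?thesis using j(1) by (auto simp: S_def in_piece_def)
qed

lemma in_piece_piece: "x \<in> {a..b} \<Longrightarrow> in_piece (piece x) x"
  unfolding piece_def using ex_in_piece in_piece_unique by (metis theI)

lemma piece_eqI: "in_piece j x \<Longrightarrow> piece x = j"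
  unfolding piece_def using in_piece_unique by blast

lemma piece_a: "piece a = 0"
  by (rule piece_eqI) (use lam_strict_mono[of 0] lam_left[of 0] in \<open>auto simp: in_piece_def\<close>)

lemma piece_b: "piece b = int g"
  by (rule piece_eqI) (auto simp: in_piece_def)

lemma piece_in_closed_knot_interval:
  assumes "0 \<le> j" "j \<le> int g" "x \<in> {lam j..lam (j + 1)}"
  shows "piece x = j \<or> piece x = j + 1 \<and> x = lam (j + 1)"
proof -
  define j' where "j' = piece x"
  have j': "in_piece j' x"
    unfolding j'_def using assms(3) knot_interval_subset by (intro in_piece_piece) blast
  note j'_closed = in_piece_imp_closed[OF j']
  consider "j' < j" | "j' = j" | "j' = j + 1" | "j + 2 \<le> j'" by linarith
  then show ?thesis
  proof cases
    case 1
    then have "x < lam (j' + 1)" using j' assms(2) unfolding in_piece_def by auto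
    moreover have "lam (j' + 1) \<le> lam j" using 1 lam_mono by simp
    ultimately show ?thesis using assms by simp
  next
    case 4
    have "lam (j + 1) < lam (j + 2)" using lam_strict_mono[of "j + 1"] 4 j'_closed assms by (simp add: add.assoc)
    moreover have "lam (j + 2) \<le> lam j'" using 4 lam_mono by simp
    ultimately show ?thesis using j'_closed assms by simp
  qed (use j'_closed assms in \<open>auto simp: j'_def\<close>)
qed

lemma Icc_eq_Union_knot_intervals: "{a..b} = (\<Union>j\<in>{0..int g}. {lam j..lam (j + 1)})"
  using in_piece_imp_closed[OF in_piece_piece] knot_interval_subset by fastforce

lemma bspline_order_1_in_piece:
  assumes "in_piece j x"
  shows "bspline b lam (Suc 0) i x = (if i = j then 1 else 0)"
proof -
  consider "lam j \<le> x" "x < lam (j + 1)" | "j = int g" "x = b"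
    using assms unfolding in_piece_def by blast
  then show ?thesis
  proof cases
    case 1
    have "x \<noteq> b" using 1 lam_le_b[of "j + 1"] by auto
    moreover have "lam i \<le> x \<and> x < lam (i + 1) \<longleftrightarrow> i = j"
      using 1 lam_mono[of "i + 1" j] lam_mono[of "j + 1" i] by (cases i j rule: linorder_cases) auto
    ultimately show ?thesis by simp
  next
    case 2
    have "\<not> (lam i \<le> x \<and> x < lam (i + 1))" using 2 lam_le_b[of "i + 1"] by auto
    moreover have "lam i < b \<and> lam (i + 1) = b \<longleftrightarrow> i = j"
      using 2 lam_eq_b_iff[of "i + 1"] lam_eq_b_iff[of i] lam_le_b[of i] by force
    ultimately show ?thesis using 2 by auto
  qed
qed

lemma bspline_eq_poly_in_piece:
  assumes "in_piece j x"
  shows "bspline b lam m i x = poly (bspline_poly lam m i j) x"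
proof (cases m)
  case (Suc n)
  have "bspline b lam (Suc n) i x = poly (bspline_poly lam (Suc n) i j) x" for i
  proof (induction n arbitrary: i)
    case 0
    then show ?case using bspline_order_1_in_piece[OF assms] by simp
  next
    case (Suc n)
    then show ?case
      by (simp only: bspline.simps bspline_poly.simps poly_add poly_mult poly_smult)
         (simp add: algebra_simps)
  qed
  then show ?thesis using Suc by simp
qed simp

lemma bspline_eq_poly_piece:
  "x \<in> {a..b} \<Longrightarrow> bspline b lam m i x = poly (bspline_poly lam m i (piece x)) x"
  using bspline_eq_poly_in_piece in_piece_piece by blast

lemma bspline_poly_diff_Suc:
  assumes "0 < m"
  shows "bspline_poly_diff lam (Suc m) i j =
      smult (1 / (lam (i + int (Suc m)) - lam i)) [:- lam i, 1:] * bspline_poly_diff lam m i j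
    + smult (1 / (lam (i + 1 + int (Suc m)) - lam (i + 1))) [:lam (i + 1 + int (Suc m)), -1:]
        * bspline_poly_diff lam m (i + 1) j"
proof (rule poly_ext)
  fix x
  define B where "B l = bspline_poly lam m (i + l) j" for l
  define P where "P l = bspline_poly lam (Suc m) (i + l) j" for l
  define c where "c l = 1 / (lam (i + l + int m) - lam (i + l))" for l
  define d where "d l = 1 / (lam (i + l + int m + 1) - lam (i + l))" for l
  have P_rec: "P l = smult (c l) [:- lam (i + l), 1:] * B l
      + smult (c (l + 1)) [:lam (i + l + 1 + int m), -1:] * B (l + 1)" for l
    using bspline_poly_Suc[OF assms, of lam "i + l" j] unfolding P_def B_def c_def
    by (simp add: ac_simps)
  have "c 1 * d 0 * (lam (i + 1 + int m) - lam i) = c 1"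
    and "c 1 * d 1 * (lam (i + 2 + int m) - lam (i + 1)) = c 1"
    using lam_mono[of i "i + 1"] lam_mono[of "i + 1" "i + 1 + int m"]
      lam_mono[of "i + 1 + int m" "i + 2 + int m"]
    by (auto simp: c_def d_def ac_simps)
  moreover have "poly (smult (d 0) (P 0) - smult (d 1) (P 1)) x
      - poly (smult (d 0) [:- lam i, 1:] * (smult (c 0) (B 0) - smult (c 1) (B 1))
        + smult (d 1) [:lam (i + 2 + int m), -1:] * (smult (c 1) (B 1) - smult (c 2) (B 2))) x
    = poly (B 1) x * (c 1 * d 0 * (lam (i + 1 + int m) - lam i)
        - c 1 * d 1 * (lam (i + 2 + int m) - lam (i + 1)))"
    by (simp add: P_rec algebra_simps)
  ultimately show "poly (bspline_poly_diff lam (Suc m) i j) x = poly (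
      smult (1 / (lam (i + int (Suc m)) - lam i)) [:- lam i, 1:] * bspline_poly_diff lam m i j
    + smult (1 / (lam (i + 1 + int (Suc m)) - lam (i + 1))) [:lam (i + 1 + int (Suc m)), -1:]
        * bspline_poly_diff lam m (i + 1) j) x"
    by (simp add: bspline_poly_diff_def P_def B_def c_def d_def ac_simps)
qed

lemma pderiv_bspline_poly:
  "pderiv (bspline_poly lam (Suc m) i j) = smult (real m) (bspline_poly_diff lam m i j)"
proof (induction m arbitrary: i)
  case (Suc m)
  show ?case
  proof (cases "m = 0")
    case True
    then show ?thesis
      by (simp add: bspline_poly.simps bspline_poly_diff_def pderiv_add pderiv_mult pderiv_smult
          pderiv_pCons algebra_simps)
  next
    case False
    define d0 where "d0 = 1 / (lam (i + int (Suc m)) - lam i)"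
    define d1 where "d1 = 1 / (lam (i + 1 + int (Suc m)) - lam (i + 1))"
    define X where "X = [:- lam i, 1:]"
    define Y where "Y = [:lam (i + 1 + int (Suc m)), -1:]"
    have pderiv_X: "pderiv (smult d0 X * p) = smult d0 p + smult d0 X * pderiv p"
      and pderiv_Y: "pderiv (smult d1 Y * p) = - smult d1 p + smult d1 Y * pderiv p" for p
      unfolding X_def Y_def pderiv_smult_linear_mult by simp_all
    have diff_Suc: "bspline_poly_diff lam (Suc m) i j
        = smult d0 (bspline_poly lam (Suc m) i j) - smult d1 (bspline_poly lam (Suc m) (i + 1) j)"
      by (simp add: bspline_poly_diff_def d0_def d1_def)
    have "pderiv (bspline_poly lam (Suc (Suc m)) i j)
        = pderiv (smult d0 X * bspline_poly lam (Suc m) i j + smult d1 Y * bspline_poly lam (Suc m) (i + 1) j)"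
      using bspline_poly_Suc[of "Suc m" lam i j] by (simp add: d0_def d1_def X_def Y_def)
    also have "\<dots> = bspline_poly_diff lam (Suc m) i j + smult (real m)
        (smult d0 X * bspline_poly_diff lam m i j + smult d1 Y * bspline_poly_diff lam m (i + 1) j)"
      unfolding pderiv_add pderiv_X pderiv_Y Suc.IH diff_Suc
      by (simp add: smult_add_right algebra_simps)
    also have "\<dots> = smult (real (Suc m)) (bspline_poly_diff lam (Suc m) i j)"
      using bspline_poly_diff_Suc[of m i j] False
      by (simp add: d0_def d1_def X_def Y_def smult_add_left)
    finally show ?thesis .
  qed
qed simp

lemma poly_bspline_poly_knot_continuous:
  assumes "2 \<le> m" "1 \<le> j" "j \<le> int g"
  shows "poly (bspline_poly lam m i (j - 1)) (lam j) = poly (bspline_poly lam m i j) (lam j)"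
proof -
  obtain n where n: "m = n + 2" using assms(1) by (metis add.commute le_iff_add)
  have "poly (bspline_poly lam (n + 2) i (j - 1)) (lam j) = poly (bspline_poly lam (n + 2) i j) (lam j)"
    for i
  proof (induction n arbitrary: i)
    case 0
    have "lam (j - 1) < lam j" "lam j < lam (j + 1)"
      using lam_strict_mono[of "j - 1"] lam_strict_mono[of j] assms by simp_all
    then show ?case
      by (cases "i = j - 1 \<or> i = j \<or> i = j - 2")
         (auto simp: numeral_2_eq_2 bspline_poly.simps diff_divide_distrib[symmetric] add.commute)
  next
    case (Suc n)
    have "0 < n + 2" by simp
    from bspline_poly_Suc[OF this, of lam i] show ?case
      by (simp only: add_Suc poly_add poly_mult Suc.IH)
  qed
  then show ?thesis using n by simp
qed

lemma higher_pderiv_bspline_poly_knot_continuous: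
  assumes "r + 2 \<le> m" "1 \<le> j" "j \<le> int g"
  shows "poly ((pderiv ^^ r) (bspline_poly lam m i (j - 1))) (lam j)
    = poly ((pderiv ^^ r) (bspline_poly lam m i j)) (lam j)"
  using assms(1)
proof (induction r arbitrary: m i)
  case 0
  then show ?case using poly_bspline_poly_knot_continuous assms by simp
next
  case (Suc r)
  then obtain m' where m: "m = Suc m'" "r + 2 \<le> m'" by (cases m) auto
  show ?case
    unfolding m funpow_Suc_right o_apply pderiv_bspline_poly bspline_poly_diff_def higher_pderiv_smult higher_pderiv_diff
      poly_smult poly_diff
    using Suc.IH[OF m(2), of i] Suc.IH[OF m(2), of "i + 1"] by simp
qed

lemma poly_bspline_poly_at_a:
  "1 \<le> m \<Longrightarrow> poly (bspline_poly lam m i 0) a = (if i = 1 - int m then 1 else 0)"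
proof (induction m arbitrary: i)
  case (Suc m)
  show ?case
  proof (cases "m = 0")
    case False
    have "lam 0 < lam 1" "lam (1 - int m) = a" "lam 0 = a"
      using lam_strict_mono[of 0] lam_left False by simp_all
    then show ?thesis
      using Suc False by (auto simp: bspline_poly_Suc diff_divide_distrib[symmetric] lam_left)
  qed simp
qed simp

lemma poly_bspline_poly_at_b:
  "1 \<le> m \<Longrightarrow> poly (bspline_poly lam m i (int g)) b = (if i = int g then 1 else 0)"
proof (induction m arbitrary: i)
  case (Suc m)
  show ?case
  proof (cases "m = 0")
    case False
    have "lam (int g) < b" "lam (int g + int m) = b"
      using lam_less_b[of "int g"] lam_right False by simp_all
    then show ?thesis
      using Suc False by (auto simp: bspline_poly_Suc diff_divide_distrib[symmetric] lam_right)
  qed simp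
qed simp

text \<open>The boundary terms of the summation by parts vanish because B_{-m}^m and B_{g+1}^m are
  zero on [a, b].\<close>

lemma bspline_poly_coeffs_const_if_pderiv_eq_0:
  assumes "0 < m"
    and indep: "\<And>d. (\<And>j. j \<in> {0..int g} \<Longrightarrow>
        (\<Sum>i\<in>{1 - int m..int g}. smult (d i) (bspline_poly lam m i j)) = 0)
      \<Longrightarrow> \<forall>i\<in>{1 - int m..int g}. d i = 0"
    and deriv_0: "\<And>j. j \<in> {0..int g} \<Longrightarrow>
      pderiv (\<Sum>i\<in>{- int m..int g}. smult (c i) (bspline_poly lam (Suc m) i j)) = 0"
    and "i \<in> {- int m..int g}"
  shows "c i = c (- int m)"
proof -
  define f where "f i = 1 / (lam (i + int m) - lam i)" for i
  define d where "d i = real m * (c i - c (i - 1)) * f i" for i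
  have "(\<Sum>i\<in>{1 - int m..int g}. smult (d i) (bspline_poly lam m i j)) = 0"
    if j: "j \<in> {0..int g}" for j
  proof -
    define G where "G i = smult (f i) (bspline_poly lam m i j)" for i
    have G_boundary: "G (- int m) = 0" "G (int g + 1) = 0"
      using j by (auto simp: G_def bspline_poly_eq_0_outside)
    have "0 = (\<Sum>i\<in>{- int m..int g}. smult (c i) (pderiv (bspline_poly lam (Suc m) i j)))"
      using deriv_0[OF j] by (simp add: higher_pderiv_sum[of 1, simplified] pderiv_smult)
    also have "\<dots> = (\<Sum>i\<in>{- int m..int g}. smult (real m * c i) (G i - G (i + 1)))"
      unfolding pderiv_bspline_poly bspline_poly_diff_def G_def f_def by (simp add: smult_smult mult.commute)
    also have "\<dots> = (\<Sum>i\<in>{1 - int m..int g}. smult (real m * c i - real m * c (i - 1)) (G i))"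
      using sum_smult_diff_shift_int[OF G_boundary] by simp
    also have "\<dots> = (\<Sum>i\<in>{1 - int m..int g}. smult (d i) (bspline_poly lam m i j))"
      unfolding G_def d_def by (simp add: smult_smult right_diff_distrib)
    finally show ?thesis by simp
  qed
  then have d_0: "\<forall>i\<in>{1 - int m..int g}. d i = 0"
    by (rule indep)
  have "c i = c (i - 1)" if "- int m < i" "i \<le> int g" for i
  proof -
    have "f i \<noteq> 0"
      using lam_less[of i "i + int m"] that \<open>0 < m\<close> by (simp add: f_def)
    then show ?thesis
      using d_0[rule_format, of i] that \<open>0 < m\<close> by (simp add: d_def)
  qed
  then show ?thesis
    using eq_first_if_consecutive_eq_int[of "- int m" "int g" c i] assms(4) by simp
qed

lemma bspline_polys_independent:
  assumes "0 < m"
    and "\<And>j. j \<in> {0..int g} \<Longrightarrow> (\<Sum>i\<in>{1 - int m..int g}. smult (c i) (bspline_poly lam m i j)) = 0"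
  shows "\<forall>i\<in>{1 - int m..int g}. c i = 0"
  using assms
proof (induction m arbitrary: c)
  case (Suc m)
  have sum_0: "(\<Sum>i\<in>{- int m..int g}. smult (c i) (bspline_poly lam (Suc m) i j)) = 0"
    if "j \<in> {0..int g}" for j
    using Suc.prems(2)[OF that] by simp
  show ?case
  proof (cases "m = 0")
    case True
    then show ?thesis
      using sum_0 bspline_polys_order_1_independent[of g c] by simp
  next
    case False
    then have "0 < m" by simp
    have deriv_0: "pderiv (\<Sum>i\<in>{- int m..int g}. smult (c i) (bspline_poly lam (Suc m) i j)) = 0"
      if "j \<in> {0..int g}" for j
      unfolding sum_0[OF that] by simp
    have const: "c i = c (- int m)" if "i \<in> {- int m..int g}" for i
      by (rule bspline_poly_coeffs_const_if_pderiv_eq_0[OF \<open>0 < m\<close> Suc.IH[OF \<open>0 < m\<close>] deriv_0 that])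
    have "c (- int m) = (\<Sum>i\<in>{- int m..int g}. if i = - int m then c i else 0)"
      by simp
    also have "\<dots> = (\<Sum>i\<in>{- int m..int g}. c i * poly (bspline_poly lam (Suc m) i 0) a)"
      by (rule sum.cong) (simp_all add: poly_bspline_poly_at_a)
    also have "\<dots> = poly (\<Sum>i\<in>{- int m..int g}. smult (c i) (bspline_poly lam (Suc m) i 0)) a"
      by (simp add: poly_sum)
    also have "\<dots> = 0"
      unfolding sum_0[of 0, simplified] by simp
    finally have "c (- int m) = 0" .
    show ?thesis
    proof
      fix i assume "i \<in> {1 - int (Suc m)..int g}"
      then have "c i = c (- int m)" by (intro const) simp
      with \<open>c (- int m) = 0\<close> show "c i = 0" by simp
    qed
  qed
qed simp

section \<open>Gluing polynomial pieces\<close>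

lemma poly_piece_eq_poly_knot_interval:
  assumes continuous: "\<And>j. 1 \<le> j \<Longrightarrow> j \<le> int g \<Longrightarrow> poly (Q (j - 1)) (lam j) = poly (Q j) (lam j)"
    and j: "0 \<le> j" "j \<le> int g" "x \<in> {lam j..lam (j + 1)}"
  shows "poly (Q (piece x)) x = poly (Q j) x"
proof -
  have "in_piece (piece x) x"
    using j(3) knot_interval_subset by (intro in_piece_piece) blast
  then have "piece x \<le> int g"
    using in_piece_imp_closed by blast
  then show ?thesis
    using piece_in_closed_knot_interval[OF j] continuous[of "j + 1"] j by auto
qed

lemma continuous_on_piecewise_poly:
  assumes "\<And>j. 1 \<le> j \<Longrightarrow> j \<le> int g \<Longrightarrow> poly (Q (j - 1)) (lam j) = poly (Q j) (lam j)"
  shows "continuous_on {a..b} (\<lambda>x. poly (Q (piece x)) x)"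
  unfolding Icc_eq_Union_knot_intervals
proof (rule continuous_on_closed_Union)
  fix j assume "j \<in> {0..int g}"
  then show "continuous_on {lam j..lam (j + 1)} (\<lambda>x. poly (Q (piece x)) x)"
    using poly_piece_eq_poly_knot_interval[OF assms]
    by (auto intro: continuous_on_eq[OF continuous_on_poly[OF continuous_on_id]])
qed auto

lemma has_real_derivative_piecewise_poly:
  assumes continuous: "\<And>j. 1 \<le> j \<Longrightarrow> j \<le> int g \<Longrightarrow> poly (Q (j - 1)) (lam j) = poly (Q j) (lam j)"
    and continuous_deriv: "\<And>j. 1 \<le> j \<Longrightarrow> j \<le> int g \<Longrightarrow>
      poly (pderiv (Q (j - 1))) (lam j) = poly (pderiv (Q j)) (lam j)"
    and "x \<in> {a..b}"
  shows "((\<lambda>y. poly (Q (piece y)) y) has_real_derivative poly (pderiv (Q (piece x))) x)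
    (at x within {a..b})"
  unfolding Icc_eq_Union_knot_intervals
proof (rule has_field_derivative_within_closed_Union)
  fix j assume j: "j \<in> {0..int g}" "x \<in> {lam j..lam (j + 1)}"
  have "((\<lambda>y. poly (Q j) y) has_real_derivative poly (pderiv (Q (piece x))) x)
      (at x within {lam j..lam (j + 1)})"
    using poly_piece_eq_poly_knot_interval[of "\<lambda>j. pderiv (Q j)", OF continuous_deriv] j
    by (auto intro: has_field_derivative_at_within simp: poly_DERIV)
  then show "((\<lambda>y. poly (Q (piece y)) y) has_real_derivative poly (pderiv (Q (piece x))) x)
      (at x within {lam j..lam (j + 1)})"
    by (rule has_field_derivative_transform_within[where d = 1])
       (use j poly_piece_eq_poly_knot_interval[OF continuous] in auto)
qed auto

lemma Cn_on_piecewise_poly: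
  assumes s: "\<And>x. x \<in> {a..b} \<Longrightarrow> s x = poly (P (piece x)) x"
    and continuous: "\<And>r j. r \<le> n \<Longrightarrow> 1 \<le> j \<Longrightarrow> j \<le> int g \<Longrightarrow>
      poly ((pderiv ^^ r) (P (j - 1))) (lam j) = poly ((pderiv ^^ r) (P j)) (lam j)"
  shows "Cn_on n {a..b} s"
  unfolding Cn_on_def
proof (intro exI conjI allI impI ballI)
  define D where "D r x = poly ((pderiv ^^ r) (P (piece x))) x" for r x
  show "D 0 x = s x" if "x \<in> {a..b}" for x
    using s[OF that] by (simp add: D_def)
  show "continuous_on {a..b} (D r)" if "r \<le> n" for r
    unfolding D_def using continuous[OF that] by (intro continuous_on_piecewise_poly)
  show "(D r has_real_derivative D (Suc r) x) (at x within {a..b})" if "r < n" "x \<in> {a..b}" for r x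
    unfolding D_def funpow.simps(2) o_apply
    using continuous[of r] continuous[of "Suc r"] that
    by (intro has_real_derivative_piecewise_poly[where Q = "\<lambda>j. (pderiv ^^ r) (P j)"]) simp_all
qed

lemma higher_pderiv_knot_continuous_if_Cn_on:
  assumes "Cn_on n {a..b} s"
    and s: "\<And>j x. 0 \<le> j \<Longrightarrow> j \<le> int g \<Longrightarrow> x \<in> {lam j..lam (j + 1)} \<Longrightarrow> s x = poly (p j) x"
    and "r \<le> n" "1 \<le> j" "j \<le> int g"
  shows "poly ((pderiv ^^ r) (p (j - 1))) (lam j) = poly ((pderiv ^^ r) (p j)) (lam j)"
proof -
  obtain D where D_0: "\<forall>x\<in>{a..b}. D 0 x = s x"
    and cont: "\<forall>r\<le>n. continuous_on {a..b} (D r)"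
    and deriv: "\<forall>r<n. \<forall>x\<in>{a..b}. (D r has_real_derivative D (Suc r) x) (at x within {a..b})"
    using assms(1) unfolding Cn_on_def by blast
  have D_eq: "D r x = poly ((pderiv ^^ r) (p l)) x"
    if l: "0 \<le> l" "l \<le> int g" "x \<in> {lam l..lam (l + 1)}" for l x
  proof (rule derivs_eq_higher_pderiv_on_interval[where S = "{a..b}" and n = n])
    show "lam l < lam (l + 1)" using lam_strict_mono l by simp
    show "D 0 y = poly (p l) y" if "y \<in> {lam l..lam (l + 1)}" for y
      using D_0 s[OF l(1,2) that] that knot_interval_subset[of l] by auto
  qed (use knot_interval_subset cont deriv assms(3) l in auto)
  have "D r (lam j) = poly ((pderiv ^^ r) (p (j - 1))) (lam j)"
    using D_eq[of "j - 1" "lam j"] assms(4,5) lam_mono[of "j - 1" j] by simp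
  moreover have "D r (lam j) = poly ((pderiv ^^ r) (p j)) (lam j)"
    using D_eq[of j "lam j"] assms(4,5) lam_mono[of j "j + 1"] by simp
  ultimately show ?thesis by simp
qed

end

section \<open>The functions Z_i^{k+1}\<close>

locale spline_knots = extended_knots +
  fixes k :: nat
  assumes k_pos: "1 \<le> k"
begin

definition Zfun_poly :: "int \<Rightarrow> int \<Rightarrow> real poly" where
  "Zfun_poly i j = pderiv (bspline_poly lam (Suc (Suc k)) i j)"

lemma Zfun_eq_poly_piece:
  assumes "x \<in> {a..b}"
  shows "Zfun b lam k i x = poly (Zfun_poly i (piece x)) x"
proof -
  have "i + int (Suc k) = i + int k + 1" "i + 1 + int (Suc k) = i + int k + 2"
    by simp_all
  then show ?thesis
    unfolding Zfun_poly_def pderiv_bspline_poly bspline_poly_diff_def Zfun_def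
    using bspline_eq_poly_piece[OF assms, of "Suc k"] by (simp add: algebra_simps)
qed

lemma higher_pderiv_Zfun_poly_knot_continuous:
  assumes "r \<le> k - 1" "1 \<le> j" "j \<le> int g"
  shows "poly ((pderiv ^^ r) (Zfun_poly i (j - 1))) (lam j) = poly ((pderiv ^^ r) (Zfun_poly i j)) (lam j)"
  using higher_pderiv_bspline_poly_knot_continuous[of "Suc r" "Suc (Suc k)" j i] assms k_pos
  unfolding Zfun_poly_def by (simp add: funpow_Suc_right del: funpow.simps)

lemma Zfun_in_spline_space: "Zfun b lam k i \<in> spline_space k g lam a b"
  unfolding spline_space_def
proof (intro CollectI conjI allI impI)
  fix j :: int assume j: "0 \<le> j \<and> j \<le> int g"
  have "degree (Zfun_poly i j) \<le> k"
    unfolding Zfun_poly_def degree_pderiv using degree_bspline_poly[of lam "Suc (Suc k)" i j] by simp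
  moreover have "Zfun b lam k i x = poly (Zfun_poly i j) x" if x: "x \<in> {lam j..lam (j + 1)}" for x
  proof -
    have "x \<in> {a..b}" using x knot_interval_subset by blast
    then show ?thesis
      using Zfun_eq_poly_piece[of x i] poly_piece_eq_poly_knot_interval[of "Zfun_poly i" j x]
        higher_pderiv_Zfun_poly_knot_continuous[of 0] j x
      by simp
  qed
  ultimately show "\<exists>p. degree p \<le> k \<and> (\<forall>x\<in>{lam j..lam (j + 1)}. Zfun b lam k i x = poly p x)"
    by blast
next
  show "Cn_on (k - 1) {a..b} (Zfun b lam k i)"
    using Zfun_eq_poly_piece higher_pderiv_Zfun_poly_knot_continuous
    by (intro Cn_on_piecewise_poly[where P = "Zfun_poly i"]) auto
qed

lemma Zfun_has_integral_0:
  assumes "- int k \<le> i" "i \<le> int g - 1"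
  shows "(Zfun b lam k i has_integral 0) {a..b}"
proof -
  define F where "F = bspline b lam (Suc (Suc k)) i"
  have "(F has_real_derivative Zfun b lam k i x) (at x within {a..b})" if x: "x \<in> {a..b}" for x
  proof -
    have "((\<lambda>y. poly (bspline_poly lam (Suc (Suc k)) i (piece y)) y) has_real_derivative
        Zfun b lam k i x) (at x within {a..b})"
      using has_real_derivative_piecewise_poly[of "bspline_poly lam (Suc (Suc k)) i" x]
        higher_pderiv_bspline_poly_knot_continuous[of 0 "Suc (Suc k)"]
        higher_pderiv_bspline_poly_knot_continuous[of 1 "Suc (Suc k)"]
        Zfun_eq_poly_piece[OF x] k_pos x
      by (simp add: Zfun_poly_def)
    then show ?thesis
      by (rule has_field_derivative_transform_within[where d = 1])
         (use x bspline_eq_poly_piece[of _ "Suc (Suc k)" i] in \<open>auto simp: F_def simp del: bspline.simps\<close>)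
  qed
  then have "(Zfun b lam k i has_integral (F b - F a)) {a..b}"
    using a_less_b
    by (intro fundamental_theorem_of_calculus) (auto simp: has_real_derivative_iff_has_vector_derivative)
  moreover have "F b = 0" "F a = 0"
    using bspline_eq_poly_piece[of b "Suc (Suc k)" i] bspline_eq_poly_piece[of a "Suc (Suc k)" i]
      poly_bspline_poly_at_b[of "Suc (Suc k)" i] poly_bspline_poly_at_a[of "Suc (Suc k)" i]
      piece_a piece_b a_less_b assms
    by (simp_all add: F_def)
  ultimately show ?thesis by simp
qed

lemma Zfun_in_zero_int_spline_space:
  "- int k \<le> i \<Longrightarrow> i \<le> int g - 1 \<Longrightarrow> Zfun b lam k i \<in> zero_int_spline_space k g lam a b"
  unfolding zero_int_spline_space_def using Zfun_in_spline_space Zfun_has_integral_0 integral_unique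
  by blast

lemma Zfun_independent:
  assumes "\<And>x. x \<in> {a..b} \<Longrightarrow> (\<Sum>i\<in>{- int k..int g - 1}. c i * Zfun b lam k i x) = 0"
    and "i \<in> {- int k..int g - 1}"
  shows "c i = 0"
proof -
  define c' where "c' i = (if i \<in> {- int k..int g - 1} then c i else 0)" for i
  have "pderiv (\<Sum>i\<in>{- int (Suc k)..int g}. smult (c' i) (bspline_poly lam (Suc (Suc k)) i j)) = 0"
    if j: "j \<in> {0..int g}" for j
  proof -
    have "pderiv (\<Sum>i\<in>{- int (Suc k)..int g}. smult (c' i) (bspline_poly lam (Suc (Suc k)) i j))
        = (\<Sum>i\<in>{- int (Suc k)..int g}. smult (c' i) (Zfun_poly i j))"
      by (simp add: higher_pderiv_sum[of 1, simplified] pderiv_smult Zfun_poly_def)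
    also have "\<dots> = (\<Sum>i\<in>{- int k..int g - 1}. smult (c i) (Zfun_poly i j))"
      by (rule sum.mono_neutral_cong_right) (auto simp: c'_def)
    also have "\<dots> = 0"
    proof (rule poly_eq_0_if_zero_on_interval)
      show "lam j < lam (j + 1)" using lam_strict_mono j by simp
      fix x assume x: "x \<in> {lam j<..<lam (j + 1)}"
      then have "in_piece j x" using j by (auto simp: in_piece_def)
      with x show "poly (\<Sum>i\<in>{- int k..int g - 1}. smult (c i) (Zfun_poly i j)) x = 0"
        using assms(1)[of x] Zfun_eq_poly_piece[of x] piece_eqI knot_interval_subset[of j]
        by (auto simp: poly_sum)
    qed
    finally show ?thesis .
  qed
  then have "c' i = c' (- int (Suc k))"
    using bspline_polys_independent[of "Suc k"] assms(2)
    by (intro bspline_poly_coeffs_const_if_pderiv_eq_0[of "Suc k"]) auto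
  then show ?thesis
    using assms(2) by (simp add: c'_def)
qed

end

section \<open>A dimension count\<close>

interpretation real_fun: vector_space "\<lambda>(c::real) (f::real \<Rightarrow> real) x. c * f x"
  by unfold_locales (auto simp: fun_eq_iff algebra_simps)

lemma sum_fun_apply: "sum f A x = (\<Sum>a\<in>A. f a x)"
  by (induction A rule: infinite_finite_induct) auto

text \<open>W \<inter> span T has dimension less than card T, because it misses u.\<close>

lemma (in vector_space) in_span_if_independent_in_proper_subspace:
  assumes "finite T" "card T \<le> card Z + 1" "independent Z" "Z \<subseteq> span T"
    and "subspace W" "Z \<subseteq> W" "u \<in> span T" "u \<notin> W" "v \<in> W" "v \<in> span T"
  shows "v \<in> span Z"
proof (rule ccontr)
  assume v: "v \<notin> span Z"
  have "span (insert v Z) \<subseteq> W"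
    using assms(5,6,9) by (intro span_minimal) auto
  then have "u \<notin> span (insert v Z)"
    using assms(8) by blast
  then have "independent (insert u (insert v Z))"
    using v assms(3) by (intro independent_insertI)
  moreover have "insert u (insert v Z) \<subseteq> span T"
    using assms(4,7,10) by auto
  ultimately have "card (insert u (insert v Z)) \<le> card T"
    using independent_span_bound[OF assms(1)] by blast
  moreover have "finite Z"
    using independent_span_bound[OF assms(1,3,4)] by blast
  moreover have "v \<notin> Z" "u \<notin> insert v Z"
    using v span_base assms(6,8,9) by auto
  ultimately show False
    using assms(2) by simp
qed

text \<open>Functions agreeing on S become equal, so that linear algebra in real \<Rightarrow> real sees only
  their restrictions to S.\<close>

definition zero_outside :: "real set \<Rightarrow> (real \<Rightarrow> real) \<Rightarrow> real \<Rightarrow> real" where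
  "zero_outside S f x = (if x \<in> S then f x else 0)"

lemma zero_outside_has_integral_iff:
  "(zero_outside S f has_integral y) S \<longleftrightarrow> (f has_integral y) S"
  by (rule has_integral_cong) (simp add: zero_outside_def)

lemma subspace_has_integral_0: "real_fun.subspace {f. (f has_integral 0) S}"
  unfolding real_fun.subspace_def
  using has_integral_add[of _ 0 S _ 0] has_integral_mult_right[of _ 0 S]
  by (auto simp: zero_fun_def plus_fun_def)

lemma zero_int_spline_has_integral_0:
  assumes "s \<in> zero_int_spline_space k g lam a b"
  shows "(s has_integral 0) {a..b}"
proof -
  have "continuous_on {a..b} s"
    using assms unfolding zero_int_spline_space_def spline_space_def Cn_on_def
    by (auto elim!: continuous_on_eq)
  then have "(s has_integral integral {a..b} s) {a..b}"
    using integrable_continuous_interval by blast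
  then show ?thesis
    using assms by (simp add: zero_int_spline_space_def)
qed

definition truncated_power :: "real \<Rightarrow> nat \<Rightarrow> real \<Rightarrow> real" where
  "truncated_power c n x = (if c \<le> x then (x - c) ^ n else 0)"

context spline_knots
begin

lemma spline_piece_jump:
  assumes "Cn_on (k - 1) {a..b} s"
    and p: "\<And>j x. 0 \<le> j \<Longrightarrow> j \<le> int g \<Longrightarrow> x \<in> {lam j..lam (j + 1)} \<Longrightarrow> s x = poly (p j) x"
    and deg: "\<And>j. 0 \<le> j \<Longrightarrow> j \<le> int g \<Longrightarrow> degree (p j) \<le> k"
    and "1 \<le> j" "j \<le> int g"
  shows "\<exists>\<beta>. p j - p (j - 1) = smult \<beta> ([:- lam j, 1:] ^ k)"
proof (rule poly_diff_eq_smult_linear_power)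
  show "degree (p j) \<le> k" "degree (p (j - 1)) \<le> k"
    using deg assms(4,5) by simp_all
  show "poly ((pderiv ^^ r) (p j)) (lam j) = poly ((pderiv ^^ r) (p (j - 1))) (lam j)" if "r < k" for r
    using higher_pderiv_knot_continuous_if_Cn_on[of "k - 1" s p r j, OF assms(1) p] that assms(4,5)
    by simp
qed

lemma poly_piece_eq_sum_jumps:
  assumes jump: "\<And>j. 1 \<le> j \<Longrightarrow> j \<le> int g \<Longrightarrow> p j - p (j - 1) = smult (\<beta> j) ([:- lam j, 1:] ^ k)"
    and J: "0 \<le> J" "J \<le> int g" "x \<in> {lam J..lam (J + 1)}"
  shows "poly (p J) x = poly (p 0) x + (\<Sum>j\<in>{1..int g}. \<beta> j * truncated_power (lam j) k x)"
proof -
  have "\<beta> j * truncated_power (lam j) k x = (if j \<le> J then poly (p j) x - poly (p (j - 1)) x else 0)"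
    if j: "j \<in> {1..int g}" for j
  proof (cases "j \<le> J")
    case True
    then have "lam j \<le> x" using lam_mono[of j J] J by simp
    then show ?thesis
      using True jump[of j] j by (simp add: truncated_power_def poly_power flip: poly_diff)
  next
    case False
    then have "x \<le> lam j" using lam_mono[of "J + 1" j] J by simp
    then show ?thesis
      using False k_pos by (auto simp: truncated_power_def)
  qed
  then have "(\<Sum>j\<in>{1..int g}. \<beta> j * truncated_power (lam j) k x)
      = (\<Sum>j\<in>{1..int g}. if j \<le> J then poly (p j) x - poly (p (j - 1)) x else 0)"
    by (rule sum.cong[OF refl])
  also have "\<dots> = (\<Sum>j\<in>{1..J}. poly (p j) x - poly (p (j - 1)) x)"
    by (rule sum.mono_neutral_cong_right) (use J in auto)
  also have "\<dots> = poly (p J) x - poly (p 0) x"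
    using sum_diff_telescope_int[of J "\<lambda>j. poly (p j) x"] J by simp
  finally show ?thesis by simp
qed

lemma spline_eq_truncated_power_combination:
  assumes s: "s \<in> spline_space k g lam a b"
  obtains \<alpha> \<beta> where "\<And>x. x \<in> {a..b} \<Longrightarrow>
    s x = (\<Sum>l\<le>k. \<alpha> l * x ^ l) + (\<Sum>j\<in>{1..int g}. \<beta> j * truncated_power (lam j) k x)"
proof -
  have "\<forall>j. \<exists>p. 0 \<le> j \<and> j \<le> int g \<longrightarrow> degree p \<le> k \<and> (\<forall>x\<in>{lam j..lam (j + 1)}. s x = poly p x)"
    using s unfolding spline_space_def by blast
  then obtain p where p: "\<And>j. 0 \<le> j \<Longrightarrow> j \<le> int g \<Longrightarrow>
      degree (p j) \<le> k \<and> (\<forall>x\<in>{lam j..lam (j + 1)}. s x = poly (p j) x)"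
    by metis
  have "\<exists>\<beta>. p j - p (j - 1) = smult \<beta> ([:- lam j, 1:] ^ k)" if "1 \<le> j" "j \<le> int g" for j
    using s p that by (intro spline_piece_jump) (auto simp: spline_space_def)
  then obtain \<beta> where \<beta>: "\<And>j. 1 \<le> j \<Longrightarrow> j \<le> int g \<Longrightarrow> p j - p (j - 1) = smult (\<beta> j) ([:- lam j, 1:] ^ k)"
    by metis
  have "s x = (\<Sum>l\<le>k. coeff (p 0) l * x ^ l) + (\<Sum>j\<in>{1..int g}. \<beta> j * truncated_power (lam j) k x)"
    if x: "x \<in> {a..b}" for x
  proof -
    have J: "0 \<le> piece x" "piece x \<le> int g" "x \<in> {lam (piece x)..lam (piece x + 1)}"
      using in_piece_imp_closed[OF in_piece_piece[OF x]] by auto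
    then show ?thesis
      using poly_piece_eq_sum_jumps[OF \<beta> J] p[of "piece x"] p[of 0]
        poly_eq_sum_coeff_if_degree_le[of "p 0" k x]
      by simp
  qed
  then show ?thesis using that by blast
qed

definition truncated_power_basis :: "(real \<Rightarrow> real) set" where
  "truncated_power_basis = (\<lambda>l. zero_outside {a..b} (\<lambda>x. x ^ l)) ` {..k}
    \<union> (\<lambda>j. zero_outside {a..b} (truncated_power (lam j) k)) ` {1..int g}"

lemma finite_truncated_power_basis: "finite truncated_power_basis"
  unfolding truncated_power_basis_def by simp

lemma card_truncated_power_basis: "card truncated_power_basis \<le> k + g + 1"
proof -
  have "card truncated_power_basis \<le> card {..k} + card {1..int g}"
    unfolding truncated_power_basis_def
    by (rule order.trans[OF card_Un_le add_mono[OF card_image_le card_image_le]]) auto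
  then show ?thesis by simp
qed

lemma spline_in_span_truncated_power_basis:
  assumes "s \<in> spline_space k g lam a b"
  shows "zero_outside {a..b} s \<in> real_fun.span truncated_power_basis"
proof -
  obtain \<alpha> \<beta> where s: "\<And>x. x \<in> {a..b} \<Longrightarrow>
      s x = (\<Sum>l\<le>k. \<alpha> l * x ^ l) + (\<Sum>j\<in>{1..int g}. \<beta> j * truncated_power (lam j) k x)"
    using spline_eq_truncated_power_combination[OF assms] by blast
  have "zero_outside {a..b} s
      = (\<Sum>l\<le>k. (\<lambda>x. \<alpha> l * zero_outside {a..b} (\<lambda>x. x ^ l) x))
      + (\<Sum>j\<in>{1..int g}. (\<lambda>x. \<beta> j * zero_outside {a..b} (truncated_power (lam j) k) x))"
    by (rule ext) (auto simp: zero_outside_def sum_fun_apply s)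
  also have "\<dots> \<in> real_fun.span truncated_power_basis"
    by (intro real_fun.span_add real_fun.span_sum real_fun.span_scale real_fun.span_base)
       (auto simp: truncated_power_basis_def)
  finally show ?thesis .
qed

lemma sum_zero_outside_Zfun:
  "(\<Sum>i\<in>A. (\<lambda>x. c i * zero_outside {a..b} (Zfun b lam k i) x)) x
    = (if x \<in> {a..b} then \<Sum>i\<in>A. c i * Zfun b lam k i x else 0)"
  by (auto simp: sum_fun_apply zero_outside_def)

lemma inj_on_zero_outside_Zfun: "inj_on (\<lambda>i. zero_outside {a..b} (Zfun b lam k i)) {- int k..int g - 1}"
proof
  fix i i' assume i: "i \<in> {- int k..int g - 1}" "i' \<in> {- int k..int g - 1}"
    and eq: "zero_outside {a..b} (Zfun b lam k i) = zero_outside {a..b} (Zfun b lam k i')"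
  show "i = i'"
  proof (rule ccontr)
    assume "i \<noteq> i'"
    define c where "c l = (if l = i then 1 else if l = i' then -1 else 0 :: real)" for l
    have "(\<Sum>l\<in>{- int k..int g - 1}. c l * Zfun b lam k l x) = 0" if "x \<in> {a..b}" for x
    proof -
      have "(\<Sum>l\<in>{- int k..int g - 1}. c l * Zfun b lam k l x) = Zfun b lam k i x - Zfun b lam k i' x"
        using i \<open>i \<noteq> i'\<close> by (simp add: c_def if_distrib[of "\<lambda>c. c * _"] sum.If_cases Int_absorb1)
      also have "\<dots> = 0"
        using fun_cong[OF eq, of x] that by (simp add: zero_outside_def)
      finally show ?thesis .
    qed
    then have "c i = 0" using Zfun_independent i(1) by blast
    then show False by (simp add: c_def)
  qed
qed

lemma independent_zero_outside_Zfun: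
  "real_fun.independent ((\<lambda>i. zero_outside {a..b} (Zfun b lam k i)) ` {- int k..int g - 1})"
  (is "real_fun.independent (?Z ` ?I)")
proof (rule real_fun.independent_if_scalars_zero)
  fix u v assume u: "(\<Sum>v\<in>?Z ` ?I. (\<lambda>x. u v * v x)) = 0" and v: "v \<in> ?Z ` ?I"
  have "(\<Sum>i\<in>?I. u (?Z i) * Zfun b lam k i x) = 0" if x: "x \<in> {a..b}" for x
  proof -
    have "(\<Sum>i\<in>?I. u (?Z i) * Zfun b lam k i x) = (\<Sum>i\<in>?I. (\<lambda>x. u (?Z i) * ?Z i x)) x"
      using sum_zero_outside_Zfun[of "\<lambda>i. u (?Z i)" ?I x] x by simp
    also have "\<dots> = (\<Sum>v\<in>?Z ` ?I. (\<lambda>x. u v * v x)) x"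
      by (simp only: sum.reindex[OF inj_on_zero_outside_Zfun] o_def)
    finally show ?thesis
      using u by simp
  qed
  moreover obtain i where "i \<in> ?I" "v = ?Z i"
    using v by blast
  ultimately show "u v = 0"
    using Zfun_independent[of "\<lambda>i. u (?Z i)"] by blast
qed simp

lemma zero_outside_zero_int_spline_in_span_Zfun:
  assumes s: "s \<in> zero_int_spline_space k g lam a b"
  shows "zero_outside {a..b} s
    \<in> real_fun.span ((\<lambda>i. zero_outside {a..b} (Zfun b lam k i)) ` {- int k..int g - 1})"
    (is "_ \<in> real_fun.span (?Z ` ?I)")
proof -
  define W where "W = {f :: real \<Rightarrow> real. (f has_integral 0) {a..b}}"
  define T where "T = truncated_power_basis"
  have s_W: "zero_outside {a..b} s \<in> W"
    using zero_int_spline_has_integral_0[OF s] by (simp add: W_def zero_outside_has_integral_iff)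
  have one_not_W: "zero_outside {a..b} (\<lambda>x. x ^ 0) \<notin> W"
  proof
    assume "zero_outside {a..b} (\<lambda>x. x ^ 0) \<in> W"
    then have "((\<lambda>x. 1 :: real) has_integral 0) {a..b}"
      by (simp add: W_def zero_outside_has_integral_iff)
    moreover have "((\<lambda>x. 1 :: real) has_integral (b - a)) {a..b}"
      using has_integral_const_real[of "1 :: real" a b] a_less_b by simp
    ultimately have "(0 :: real) = b - a"
      by (rule has_integral_unique)
    then show False
      using a_less_b by simp
  qed
  have Z_W: "?Z ` ?I \<subseteq> W"
    using Zfun_has_integral_0 by (auto simp: W_def zero_outside_has_integral_iff)
  have Z_T: "?Z ` ?I \<subseteq> real_fun.span T"
    using spline_in_span_truncated_power_basis[OF Zfun_in_spline_space] by (auto simp: T_def)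
  have one_T: "zero_outside {a..b} (\<lambda>x. x ^ 0) \<in> real_fun.span T"
    by (rule real_fun.span_base) (auto simp: T_def truncated_power_basis_def intro!: image_eqI[where x = 0])
  have s_T: "zero_outside {a..b} s \<in> real_fun.span T"
    using s spline_in_span_truncated_power_basis by (simp add: T_def zero_int_spline_space_def)
  have "card (?Z ` ?I) = k + g"
    using card_image[OF inj_on_zero_outside_Zfun] by simp
  then have "card T \<le> card (?Z ` ?I) + 1"
    using card_truncated_power_basis by (simp add: T_def)
  from real_fun.in_span_if_independent_in_proper_subspace[OF
      finite_truncated_power_basis[folded T_def] this independent_zero_outside_Zfun Z_T
      subspace_has_integral_0[of "{a..b}", folded W_def] Z_W one_T one_not_W s_W s_T]
  show ?thesis .
qed

lemma zero_int_spline_in_span_Zfun: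
  assumes "s \<in> zero_int_spline_space k g lam a b"
  obtains c where "\<And>x. x \<in> {a..b} \<Longrightarrow> s x = (\<Sum>i\<in>{- int k..int g - 1}. c i * Zfun b lam k i x)"
proof -
  define I where "I = {- int k..int g - 1}"
  define Z where "Z = (\<lambda>i. zero_outside {a..b} (Zfun b lam k i))"
  have "zero_outside {a..b} s \<in> range (\<lambda>u. \<Sum>v\<in>Z ` I. (\<lambda>x. u v * v x))"
    using zero_outside_zero_int_spline_in_span_Zfun[OF assms] real_fun.span_finite[of "Z ` I"]
    by (simp add: Z_def I_def)
  then obtain u where u: "zero_outside {a..b} s = (\<Sum>v\<in>Z ` I. (\<lambda>x. u v * v x))"
    by blast
  show ?thesis
  proof (rule that)
    fix x assume x: "x \<in> {a..b}"
    have "s x = (\<Sum>v\<in>Z ` I. (\<lambda>x. u v * v x)) x"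
      using fun_cong[OF u, of x] x by (simp add: zero_outside_def)
    also have "\<dots> = (\<Sum>i\<in>I. (\<lambda>x. u (Z i) * Z i x)) x"
      by (simp only: sum.reindex[OF inj_on_zero_outside_Zfun[folded Z_def I_def]] o_def)
    also have "\<dots> = (\<Sum>i\<in>{- int k..int g - 1}. u (Z i) * Zfun b lam k i x)"
      using sum_zero_outside_Zfun[of "\<lambda>i. u (Z i)" I x] x by (simp add: Z_def I_def)
    finally show "s x = (\<Sum>i\<in>{- int k..int g - 1}. u (Z i) * Zfun b lam k i x)" .
  qed
qed

lemma Zfun_basis_of_zero_int_spline_space:
  "(\<forall>i \<in> {- int k .. int g - 1}. Zfun b lam k i \<in> zero_int_spline_space k g lam a b)
    \<and> (\<forall>c :: int \<Rightarrow> real.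
          (\<forall>x\<in>{a..b}. (\<Sum>i \<in> {- int k .. int g - 1}. c i * Zfun b lam k i x) = 0)
          \<longrightarrow> (\<forall>i \<in> {- int k .. int g - 1}. c i = 0))
    \<and> (\<forall>s \<in> zero_int_spline_space k g lam a b. \<exists>c :: int \<Rightarrow> real.
          \<forall>x\<in>{a..b}. s x = (\<Sum>i \<in> {- int k .. int g - 1}. c i * Zfun b lam k i x))"
proof (intro conjI ballI allI impI)
  fix i assume "i \<in> {- int k..int g - 1}"
  then show "Zfun b lam k i \<in> zero_int_spline_space k g lam a b"
    by (simp add: Zfun_in_zero_int_spline_space)
next
  fix c i
  assume "\<forall>x\<in>{a..b}. (\<Sum>i\<in>{- int k..int g - 1}. c i * Zfun b lam k i x) = 0"
    and "i \<in> {- int k..int g - 1}"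
  then show "c i = 0"
    using Zfun_independent by blast
next
  fix s assume "s \<in> zero_int_spline_space k g lam a b"
  then obtain c where "\<And>x. x \<in> {a..b} \<Longrightarrow> s x = (\<Sum>i\<in>{- int k..int g - 1}. c i * Zfun b lam k i x)"
    using zero_int_spline_in_span_Zfun by blast
  then show "\<exists>c. \<forall>x\<in>{a..b}. s x = (\<Sum>i\<in>{- int k..int g - 1}. c i * Zfun b lam k i x)"
    by blast
qed

end

section \<open>The knots outside the range of the theorem\<close>

text \<open>The theorem constrains only the knots with index in -k..g+k+1; the others are replaced by
  a and b to enter the locale extended_knots.\<close>

lemma bspline_cong:
  assumes "\<And>l. i \<le> l \<Longrightarrow> l \<le> i + int m \<Longrightarrow> lam l = lam' l"
  shows "bspline b lam m i x = bspline b lam' m i x"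
  using assms
proof (induction m arbitrary: i rule: less_induct)
  case (less m)
  consider "m = 0" | "m = Suc 0" | n where "m = Suc (Suc n)"
    by (metis nat.exhaust)
  then show ?case
  proof cases
    case 3
    have "bspline b lam (Suc n) i x = bspline b lam' (Suc n) i x"
      "bspline b lam (Suc n) (i + 1) x = bspline b lam' (Suc n) (i + 1) x"
      using less.IH[of "Suc n"] less.prems 3 by simp_all
    moreover have "lam i = lam' i" "lam (i + 1) = lam' (i + 1)"
      "lam (i + int (Suc n)) = lam' (i + int (Suc n))"
      "lam (i + int (Suc n) + 1) = lam' (i + int (Suc n) + 1)"
      using less.prems 3 by simp_all
    ultimately show ?thesis
      unfolding 3 by (simp only: bspline.simps)
  qed (use less.prems in simp_all)
qed

lemma Zfun_cong:
  assumes "\<And>l. i \<le> l \<Longrightarrow> l \<le> i + int k + 2 \<Longrightarrow> lam l = lam' l"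
  shows "Zfun b lam k i = Zfun b lam' k i"
proof -
  have "bspline b lam (k + 1) i = bspline b lam' (k + 1) i"
    "bspline b lam (k + 1) (i + 1) = bspline b lam' (k + 1) (i + 1)"
    using assms by (auto intro!: bspline_cong)
  moreover have "lam i = lam' i" "lam (i + 1) = lam' (i + 1)" "lam (i + int k + 1) = lam' (i + int k + 1)"
    "lam (i + int k + 2) = lam' (i + int k + 2)"
    using assms by simp_all
  ultimately show ?thesis
    unfolding Zfun_def by simp
qed

lemma zero_int_spline_space_cong:
  assumes "\<And>j. 0 \<le> j \<Longrightarrow> j \<le> int g + 1 \<Longrightarrow> lam j = lam' j"
  shows "zero_int_spline_space k g lam a b = zero_int_spline_space k g lam' a b"
  unfolding zero_int_spline_space_def spline_space_def using assms by simp

lemma spline_knots_extension: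
  assumes "1 \<le> k" "lam 0 = a" "lam (int g + 1) = b" "\<And>i. 0 \<le> i \<Longrightarrow> i \<le> int g \<Longrightarrow> lam i < lam (i + 1)"
  shows "spline_knots (\<lambda>i. if i \<le> 0 then a else if int g + 1 \<le> i then b else lam i) g a b k"
  by unfold_locales (use assms in \<open>auto simp: not_le dest: assms(4)\<close>)

theorem theorem2:
  fixes k g :: nat and a b :: real and lam :: "int \<Rightarrow> real"
  assumes "k \<ge> 1"
    and "a < b"
    and "lam 0 = a" and "lam (int g + 1) = b"
    and "\<forall>i::int. 0 \<le> i \<and> i \<le> int g \<longrightarrow> lam i < lam (i + 1)"
    and "\<forall>i::int. - int k \<le> i \<and> i \<le> 0 \<longrightarrow> lam i = a"
    and "\<forall>i::int. int g + 1 \<le> i \<and> i \<le> int g + int k + 1 \<longrightarrow> lam i = b"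
  shows "(\<forall>i \<in> {- int k .. int g - 1}. Zfun b lam k i \<in> zero_int_spline_space k g lam a b)
    \<and> (\<forall>c :: int \<Rightarrow> real.
          (\<forall>x\<in>{a..b}. (\<Sum>i \<in> {- int k .. int g - 1}. c i * Zfun b lam k i x) = 0)
          \<longrightarrow> (\<forall>i \<in> {- int k .. int g - 1}. c i = 0))
    \<and> (\<forall>s \<in> zero_int_spline_space k g lam a b. \<exists>c :: int \<Rightarrow> real.
          \<forall>x\<in>{a..b}. s x = (\<Sum>i \<in> {- int k .. int g - 1}. c i * Zfun b lam k i x))"
proof -
  define lam' where "lam' i = (if i \<le> 0 then a else if int g + 1 \<le> i then b else lam i)" for i
  interpret spline_knots lam' g a b k
    unfolding lam'_def using assms(1,3-5) by (intro spline_knots_extension) auto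
  have agree: "lam l = lam' l" if "- int k \<le> l" "l \<le> int g + int k + 1" for l
    using assms(6,7) that by (auto simp: lam'_def)
  have Zfun_eq: "Zfun b lam k i = Zfun b lam' k i" if "i \<in> {- int k..int g - 1}" for i
    using that agree by (intro Zfun_cong) auto
  have space_eq: "zero_int_spline_space k g lam a b = zero_int_spline_space k g lam' a b"
    using agree by (intro zero_int_spline_space_cong) auto
  show ?thesis
    using Zfun_basis_of_zero_int_spline_space
    by (simp add: space_eq Zfun_eq cong: ball_cong sum.cong del: atLeastAtMost_iff)
qed

end
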